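(* Let $M$ be a connected Riemannian manifold, and let the Newtonian dynamical system admitting the normal shift, with data $a,\mathbf b$, be as in the context, with $\Vert\mathbf b\Vert<\infty$ for some $f$ as in the context. Let $W$ be the smooth function on $\widehat M\times\mathbb R^+$ described in the context, and let $\widetilde W=a\cdot W_v$ where $W_v=\partial W/\partial v$. If the level hypersurfaces of $W$ are connected, then for any $(p_0,v_0),(p_1,v_1)\in\widehat M\times\mathbb R^+$ with $W(p_0,v_0)=W(p_1,v_1)$ one has $\widetilde W(p_0,v_0)=\widetilde W(p_1,v_1)$.
   Context: $M$ is a Riemannian manifold with metric $g$; a Newtonian dynamical system on $M$ is given in local coordinates by $\ddot x^k+\sum_{i,j}\Gamma^k_{ij}\dot x^i\dot x^j=F^k(x,\dot x)$ with $\Gamma$ the Levi-Civita connection. Write $v=|\dot x|$, $N^i=\dot x^i/v$, $N_k=\sum_i g_{ki}N^i$. The system admits the normal shift of hypersurfaces if for every hypersurface $S$, every $p_0\in S$ and $\nu_0>0$ there are a neighborhood $S'$ of $p_0$ in $S$ and a smooth positive $\nu$ on $S'$ with $\nu(p_0)=\nu_0$ such that shifting points $p\in S'$ along trajectories with initial velocity $\nu(p)\mathbf n(p)$ ($\mathbf n$ unit normal) produces hypersurfaces orthogonal to the trajectories. For such systems $F_k=a\,N_k+v\sum_i b_i(2N^iN_k-\delta^i_k)$ with smooth $a(p,v)$, $b_i(p,v)$ on $M\times\mathbb R^+$ ($\mathbf b(p,v)\in T^*_pM$) satisfying $\left(\partial_j+b_j\partial_v\right)b_i=\left(\partial_i+b_i\partial_v\right)b_j$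 and $\left(\partial_i+b_i\partial_v\right)a=(\partial_v b_i)a$ in local coordinates $x^1,\dots,x^n,v$; $a,\mathbf b$ are lifted to $\widehat M\times\mathbb R^+$, $\widehat M$ the universal cover. $f:\mathbb R^+\to\mathbb R^+$ is positive with $\int_{v_0}^v dv/f\to+\infty$ as $v\to+\infty$ and $\to-\infty$ as $v\to0$; the $f$-norm is $\Vert\mathbf b\Vert=\sup_{p,v}|\mathbf b|/f(v)$, $|\mathbf b|^2=\sum g^{ij}b_ib_j$. The function $W$: fix $p_0\in\widehat M$; for $w>0$ let $V(p,w)$ be the global solution on $\widehat M$ of the Pfaff system $\partial V/\partial x^i=b_i(x,V)$ with $V(p_0,w)=w$; $W(p,v)$ is defined by $V(p,W(p,v))=v$ (i.e. $W(V(p,w))=w$). It is smooth, satisfies $W_v\neq0$ and $b_i=-(\partial W/\partial x^i)/W_v$. *)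

theory Defs
  imports "HOL-Analysis.Analysis"
begin

fun Ck_on :: "nat \<Rightarrow> 'a::euclidean_space set \<Rightarrow> ('a \<Rightarrow> 'b::real_normed_vector) \<Rightarrow> bool" where
  "Ck_on 0 S f = continuous_on S f"
| "Ck_on (Suc k) S f = (f differentiable_on S \<and> continuous_on S f \<and>
      (\<forall>i\<in>Basis. Ck_on k S (\<lambda>x. frechet_derivative f (at x) i)))"

definition smooth_on :: "'a::euclidean_space set \<Rightarrow> ('a \<Rightarrow> 'b::real_normed_vector) \<Rightarrow> bool" where
  "smooth_on S f \<longleftrightarrow> (\<forall>k. Ck_on k S f)"

type_synonym ('m,'n) chart = "'m set \<times> ('m \<Rightarrow> real^'n)"

definition chart_dom :: "('m,'n) chart \<Rightarrow> 'm set" where "chart_dom c = fst c"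
definition chart_map :: "('m,'n) chart \<Rightarrow> 'm \<Rightarrow> real^'n" where "chart_map c = snd c"
definition chart_img :: "('m,'n) chart \<Rightarrow> (real^'n) set" where
  "chart_img c = chart_map c ` chart_dom c"
definition chart_inv :: "('m,'n) chart \<Rightarrow> real^'n \<Rightarrow> 'm" where
  "chart_inv c = inv_into (chart_dom c) (chart_map c)"

definition transition :: "('m,'n) chart \<Rightarrow> ('m,'n) chart \<Rightarrow> real^'n \<Rightarrow> real^'n" where
  "transition c d = chart_map d \<circ> chart_inv c"

definition smooth_atlas :: "('m::topological_space,'n::finite) chart set \<Rightarrow> bool" where
  "smooth_atlas A \<longleftrightarrow>
     (\<forall>c\<in>A. open (chart_dom c) \<and> open (chart_img c) \<and>
        homeomorphism (chart_dom c) (chart_img c) (chart_map c) (chart_inv c)) \<and>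
     (\<Union>c\<in>A. chart_dom c) = UNIV \<and>
     (\<forall>c\<in>A. \<forall>d\<in>A. smooth_on (chart_map c ` (chart_dom c \<inter> chart_dom d)) (transition c d))"

definition cdom :: "('m,'n::finite) chart \<Rightarrow> ((real^'n) \<times> real) set" where
  "cdom c = chart_img c \<times> {0<..}"

definition loc :: "('m,'n) chart \<Rightarrow> ('m \<Rightarrow> real \<Rightarrow> 'b) \<Rightarrow> (real^'n) \<times> real \<Rightarrow> 'b" where
  "loc c F = (\<lambda>(x,v). F (chart_inv c x) v)"

definition smooth_fun :: "('m,'n::finite) chart set \<Rightarrow> ('m \<Rightarrow> real \<Rightarrow> real) \<Rightarrow> bool" where
  "smooth_fun A F \<longleftrightarrow> (\<forall>c\<in>A. smooth_on (cdom c) (loc c F))"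

definition pdx :: "'n \<Rightarrow> ((real^'n) \<times> real \<Rightarrow> real) \<Rightarrow> (real^'n) \<times> real \<Rightarrow> real" where
  "pdx i F z = frechet_derivative F (at z) (axis i 1, 0)"
definition pdv :: "((real^'n) \<times> real \<Rightarrow> real) \<Rightarrow> (real^'n) \<times> real \<Rightarrow> real" where
  "pdv F z = frechet_derivative F (at z) (0, 1)"

text \<open>bc c x v is the vector of components (b_1,...,b_n) in chart c at coordinates x, speed v.
  Compatibility: b^c(u) = b^d(D(transition c d) u) on overlaps.\<close>
definition covector_field :: "('m::topological_space,'n::finite) chart set
    \<Rightarrow> (('m,'n) chart \<Rightarrow> real^'n \<Rightarrow> real \<Rightarrow> real^'n) \<Rightarrow> bool" where
  "covector_field A bc \<longleftrightarrow>
     (\<forall>c\<in>A. smooth_on (cdom c) (\<lambda>(x,v). bc c x v)) \<and>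
     (\<forall>c\<in>A. \<forall>d\<in>A. \<forall>p\<in>chart_dom c \<inter> chart_dom d. \<forall>v>0. \<forall>u.
        bc c (chart_map c p) v \<bullet> u =
        bc d (chart_map d p) v \<bullet> frechet_derivative (transition c d) (at (chart_map c p)) u)"

definition bcomp :: "(('m,'n) chart \<Rightarrow> real^'n \<Rightarrow> real \<Rightarrow> real^'n) \<Rightarrow> ('m,'n) chart
    \<Rightarrow> 'n \<Rightarrow> (real^'n) \<times> real \<Rightarrow> real" where
  "bcomp bc c i = (\<lambda>(x,v). bc c x v $ i)"

definition riemannian_metric :: "('m::topological_space,'n::finite) chart set
    \<Rightarrow> (('m,'n) chart \<Rightarrow> real^'n \<Rightarrow> real^'n^'n) \<Rightarrow> bool" where
  "riemannian_metric A gc \<longleftrightarrow>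
     (\<forall>c\<in>A. smooth_on (chart_img c) (gc c) \<and>
        (\<forall>x\<in>chart_img c. transpose (gc c x) = gc c x \<and>
           (\<forall>u. u \<noteq> 0 \<longrightarrow> u \<bullet> (gc c x *v u) > 0))) \<and>
     (\<forall>c\<in>A. \<forall>d\<in>A. \<forall>p\<in>chart_dom c \<inter> chart_dom d. \<forall>u w.
        let J = frechet_derivative (transition c d) (at (chart_map c p)) in
        u \<bullet> (gc c (chart_map c p) *v w) = J u \<bullet> (gc d (chart_map d p) *v J w))"

definition covec_norm :: "real^'n^'n \<Rightarrow> real^'n \<Rightarrow> real" where
  "covec_norm G b = sqrt (b \<bullet> (matrix_inv G *v b))"

definition f_norm_finite :: "('m,'n::finite) chart set \<Rightarrow> (('m,'n) chart \<Rightarrow> real^'n \<Rightarrow> real^'n^'n)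
    \<Rightarrow> (real \<Rightarrow> real) \<Rightarrow> (('m,'n) chart \<Rightarrow> real^'n \<Rightarrow> real \<Rightarrow> real^'n) \<Rightarrow> bool" where
  "f_norm_finite A gc f bc \<longleftrightarrow>
     (\<exists>K. \<forall>c\<in>A. \<forall>x\<in>chart_img c. \<forall>v>0. covec_norm (gc c x) (bc c x v) / f v \<le> K)"

definition admissible_f :: "(real \<Rightarrow> real) \<Rightarrow> bool" where
  "admissible_f f \<longleftrightarrow>
     (\<forall>v>0. f v > 0) \<and>
     (\<forall>s t. 0 < s \<longrightarrow> s \<le> t \<longrightarrow> (\<lambda>t. 1 / f t) integrable_on {s..t}) \<and>
     (\<forall>v0>0. filterlim (\<lambda>v. integral {v0..v} (\<lambda>t. 1 / f t)) at_top at_top \<and>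
             filterlim (\<lambda>v. - integral {v..v0} (\<lambda>t. 1 / f t)) at_bot (at_right 0))"

end

theory Submission
  imports Defs
begin

text \<open>
  In a chart, the graph \<open>v = V(x, k)\<close> of the Pfaff solution lies in the level set
  \<open>W = k\<close>. Differentiating \<open>W(x, V(x, k)) = k\<close> in \<open>x\<close> gives
  \<open>(\<partial>\<^sub>i + b\<^sub>i \<partial>\<^sub>v) W = 0\<close>; differentiating this in \<open>v\<close> and commuting the
  mixed partials gives \<open>(\<partial>\<^sub>i + b\<^sub>i \<partial>\<^sub>v) W\<^sub>v = - (\<partial>\<^sub>v b\<^sub>i) W\<^sub>v\<close>. Together with
  \<open>(\<partial>\<^sub>i + b\<^sub>i \<partial>\<^sub>v) a = (\<partial>\<^sub>v b\<^sub>i) a\<close> and the product rule, \<open>a W\<^sub>v\<close> has zero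
  derivative along these graphs, which locally parametrise the level set. So \<open>a W\<^sub>v\<close> is
  locally constant on every level set of \<open>W\<close>, hence constant on it by connectedness.

  Only the existence of \<open>V\<close> and \<open>W\<close> matters.
\<close>

context
  fixes F Fs Ft Fts :: "real \<Rightarrow> real \<Rightarrow> real" and d :: real
  assumes d: "d > 0"
    and hs: "\<And>s t. \<bar>s\<bar> < d \<Longrightarrow> \<bar>t\<bar> < d \<Longrightarrow> ((\<lambda>s. F s t) has_real_derivative Fs s t) (at s)"
    and ht: "\<And>s t. \<bar>s\<bar> < d \<Longrightarrow> \<bar>t\<bar> < d \<Longrightarrow> ((\<lambda>t. F s t) has_real_derivative Ft s t) (at t)"
    and hts: "\<And>s t. \<bar>s\<bar> < d \<Longrightarrow> \<bar>t\<bar> < d \<Longrightarrow> ((\<lambda>s. Ft s t) has_real_derivative Fts s t) (at s)"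
    and cont_Ft: "continuous_on ({-d<..<d} \<times> {-d<..<d}) (\<lambda>(s,t). Ft s t)"
    and cont_Fts: "continuous_on ({-d<..<d} \<times> {-d<..<d}) (\<lambda>(s,t). Fts s t)"
begin

lemma mixed_partial_integral_form:
  assumes t: "-d < a" "a \<le> t" "t < d"
  shows "Fs 0 t = Fs 0 a + integral {a..t} (Fts 0)"
proof -
  let ?I = "{-d<..<d}"
  have F_eq: "F s t = F s a + integral {a..t} (Ft s)" if s: "s \<in> ?I" for s
  proof -
    have "(Ft s has_integral F s t - F s a) {a..t}"
    proof (rule fundamental_theorem_of_calculus)
      fix u assume "u \<in> {a..t}"
      then have "\<bar>u\<bar> < d" using t by auto
      then show "((\<lambda>t. F s t) has_vector_derivative Ft s u) (at u within {a..t})"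
        using ht s by (auto simp: has_real_derivative_iff_has_vector_derivative[symmetric]
            intro: has_field_derivative_at_within)
    qed (use t in auto)
    then show ?thesis by (simp add: integral_unique)
  qed
  have "((\<lambda>s. integral (cbox a t) (Ft s)) has_field_derivative integral (cbox a t) (Fts 0))
      (at 0 within ?I)"
  proof (rule leibniz_rule_field_derivative)
    fix s u assume "s \<in> ?I" "u \<in> cbox a t"
    then show "((\<lambda>s. Ft s u) has_field_derivative Fts s u) (at s within ?I)"
      using hts t by (auto intro: has_field_derivative_at_within)
  next
    fix s assume "s \<in> ?I"
    have "continuous_on {a..t} (\<lambda>u. (\<lambda>(s,t). Ft s t) (s, u))"
      by (rule continuous_on_compose2[OF cont_Ft]) (use \<open>s \<in> ?I\<close> t in \<open>auto intro!: continuous_intros\<close>)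
    then show "Ft s integrable_on cbox a t" by (simp add: integrable_continuous_real)
  next
    show "continuous_on (?I \<times> cbox a t) (\<lambda>(s, t). Fts s t)"
      by (rule continuous_on_subset[OF cont_Fts]) (use t in auto)
  qed (use d in auto)
  then have "((\<lambda>s. F s a + integral {a..t} (Ft s)) has_field_derivative
      Fs 0 a + integral {a..t} (Fts 0)) (at 0)"
    using hs[of 0 a] t d by (auto intro!: DERIV_add simp: at_within_open[of 0 ?I])
  then have "((\<lambda>s. F s t) has_field_derivative Fs 0 a + integral {a..t} (Fts 0)) (at 0)"
    by (rule has_field_derivative_transform_within_open[of _ _ _ ?I]) (use d F_eq in auto)
  moreover have "((\<lambda>s. F s t) has_field_derivative Fs 0 t) (at 0)"
    using hs[of 0 t] t d by auto
  ultimately show ?thesis using DERIV_unique by blast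
qed

lemma mixed_partials_commute: "((\<lambda>t. Fs 0 t) has_real_derivative Fts 0 0) (at 0)"
proof -
  define a where "a = - d / 2"
  have a: "-d < a" "a < 0" using d by (auto simp: a_def)
  have "continuous_on {a..-a} (\<lambda>t. (\<lambda>(s,t). Fts s t) (0, t))"
    by (rule continuous_on_compose2[OF cont_Fts]) (use d a in \<open>auto intro!: continuous_intros\<close>)
  then have "((\<lambda>t. integral {a..t} (Fts 0)) has_real_derivative Fts 0 0) (at 0)"
    using integral_has_vector_derivative[of a "-a" "Fts 0" 0] a at_within_Icc_at[of a 0 "-a"]
    by (simp add: has_real_derivative_iff_has_vector_derivative)
  then have "((\<lambda>t. Fs 0 a + integral {a..t} (Fts 0)) has_real_derivative Fts 0 0) (at 0)"
    using DERIV_add[OF DERIV_const] by fastforce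
  then show ?thesis
  proof (rule has_field_derivative_transform_within_open[of _ _ _ "{a<..<-a}"])
    fix t :: real assume "t \<in> {a<..<-a}"
    then show "Fs 0 a + integral {a..t} (Fts 0) = Fs 0 t"
      using mixed_partial_integral_form[of a t] a by auto
  qed (use a in auto)
qed

end

lemma smooth_on_imp_continuous_on: "smooth_on S F \<Longrightarrow> continuous_on S F"
  by (metis Ck_on.simps(1) smooth_on_def)

lemma smooth_on_imp_differentiable:
  assumes "smooth_on S F" "open S" "z \<in> S"
  shows "F differentiable (at z)"
  using assms differentiable_on_eq_differentiable_at unfolding smooth_on_def
  by (metis Ck_on.simps(2))

lemma smooth_on_frechet_derivative:
  assumes "smooth_on S F" "e \<in> Basis"
  shows "smooth_on S (\<lambda>x. frechet_derivative F (at x) e)"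
  using assms unfolding smooth_on_def by (metis Ck_on.simps(2))

lemma has_real_derivative_along_line:
  fixes F :: "'a::real_normed_vector \<Rightarrow> real"
  assumes "F differentiable (at (p + s *\<^sub>R q))"
  shows "((\<lambda>s. F (p + s *\<^sub>R q)) has_real_derivative frechet_derivative F (at (p + s *\<^sub>R q)) q) (at s)"
proof -
  let ?D = "frechet_derivative F (at (p + s *\<^sub>R q))"
  have D: "(F has_derivative ?D) (at (p + s *\<^sub>R q))"
    using assms frechet_derivative_works by blast
  have "((\<lambda>s. p + s *\<^sub>R q) has_derivative (\<lambda>h. h *\<^sub>R q)) (at s)"
    by (auto intro!: derivative_eq_intros)
  from has_derivative_compose[OF this D]
  have "((\<lambda>s. F (p + s *\<^sub>R q)) has_derivative (\<lambda>h. ?D (h *\<^sub>R q))) (at s)" .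
  moreover have "(\<lambda>h. ?D (h *\<^sub>R q)) = (*) (?D q)"
    using linear_scale[OF has_derivative_linear[OF D]] by (auto simp: mult.commute)
  ultimately show ?thesis unfolding has_field_derivative_def by simp
qed

lemma pdv_has_real_derivative:
  assumes "F differentiable (at (x, v))"
  shows "((\<lambda>t. F (x, t)) has_real_derivative pdv F (x, v)) (at v)"
  using has_real_derivative_along_line[of F "(x, 0)" v "(0, 1)"] assms by (simp add: pdv_def)

lemma pdx_has_real_derivative:
  assumes "F differentiable (at (x + s *\<^sub>R axis i 1, v))"
  shows "((\<lambda>s. F (x + s *\<^sub>R axis i 1, v)) has_real_derivative pdx i F (x + s *\<^sub>R axis i 1, v)) (at s)"
  using has_real_derivative_along_line[of F "(x, v)" s "(axis i 1, 0)"] assms by (simp add: pdx_def)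

lemma smooth_on_pdv: "smooth_on S F \<Longrightarrow> smooth_on S (pdv F)"
  using smooth_on_frechet_derivative[of S F "(0, 1)"]
  by (simp add: pdv_def[abs_def] Basis_prod_def)

lemma smooth_on_pdx:
  fixes F :: "(real^'n) \<times> real \<Rightarrow> real"
  assumes "smooth_on S F"
  shows "smooth_on S (pdx i F)"
proof -
  have "(axis i 1, 0) \<in> (Basis :: ((real^'n) \<times> real) set)"
    by (auto simp: Basis_prod_def Basis_vec_def)
  from smooth_on_frechet_derivative[OF assms this] show ?thesis
    by (simp add: pdx_def[abs_def])
qed

lemma pdx_pdv_commute:
  fixes F :: "(real^'n) \<times> real \<Rightarrow> real"
  assumes F: "smooth_on S F" and S: "open S" "(x, v) \<in> S"
  shows "((\<lambda>t. pdx i F (x, t)) has_real_derivative pdx i (pdv F) (x, v)) (at v)"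
proof -
  obtain r where r: "r > 0" "ball (x, v) r \<subseteq> S" using S open_contains_ball by blast
  define d where "d = r / 2"
  have d: "d > 0" using r by (simp add: d_def)
  define p where "p s t = (x + s *\<^sub>R axis i 1, v + t)" for s t
  have p_in: "p s t \<in> S" if "\<bar>s\<bar> < d" "\<bar>t\<bar> < d" for s t
  proof -
    have "dist (x, v) (p s t) = norm (- (s *\<^sub>R axis i (1::real)), - t)"
      by (simp add: p_def dist_norm)
    also have "\<dots> \<le> norm (- (s *\<^sub>R axis i (1::real))) + norm (- t)"
      by (rule norm_Pair_le)
    also have "\<dots> < r" using that by (simp add: d_def)
    finally show ?thesis using r by auto
  qed
  have diff: "G differentiable (at (p s t))" if "smooth_on S G" "\<bar>s\<bar> < d" "\<bar>t\<bar> < d" for G s t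
    using smooth_on_imp_differentiable[OF that(1) S(1) p_in[OF that(2,3)]] .
  have ds: "((\<lambda>s. G (p s t)) has_real_derivative pdx i G (p s t)) (at s)"
    if "smooth_on S G" "\<bar>s\<bar> < d" "\<bar>t\<bar> < d" for G s t
    using pdx_has_real_derivative[of G x s i "v + t"] diff[OF that] by (simp add: p_def)
  have dt: "((\<lambda>t. F (p s t)) has_real_derivative pdv F (p s t)) (at t)"
    if "\<bar>s\<bar> < d" "\<bar>t\<bar> < d" for s t
    using has_real_derivative_along_line[of F "(x + s *\<^sub>R axis i 1, v)" t "(0, 1)"] diff[OF F that]
    by (simp add: p_def pdv_def)
  have cont: "continuous_on ({-d<..<d} \<times> {-d<..<d}) (\<lambda>(s, t). G (p s t))"
    if "smooth_on S G" for G
  proof -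
    have "continuous_on ({-d<..<d} \<times> {-d<..<d}) (\<lambda>z. G (p (fst z) (snd z)))"
      by (rule continuous_on_compose2[OF smooth_on_imp_continuous_on[OF that]])
        (use p_in in \<open>auto simp: p_def intro!: continuous_intros\<close>)
    then show ?thesis by (simp add: case_prod_beta)
  qed
  have "((\<lambda>t. pdx i F (p 0 t)) has_real_derivative pdx i (pdv F) (p 0 0)) (at 0)"
    by (rule mixed_partials_commute[OF d ds[OF F] dt ds[OF smooth_on_pdv[OF F]]])
      (auto intro: cont smooth_on_pdv smooth_on_pdx F)
  then show ?thesis
    using DERIV_shift[of "\<lambda>t. pdx i F (x, t)" _ 0 v] by (simp add: p_def add.commute)
qed

lemma frechet_derivative_mult_apply:
  fixes F G :: "'a::real_normed_vector \<Rightarrow> real"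
  assumes "F differentiable (at z)" "G differentiable (at z)"
  shows "frechet_derivative (\<lambda>x. F x * G x) (at z) h =
    F z * frechet_derivative G (at z) h + frechet_derivative F (at z) h * G z"
  using fun_cong[OF frechet_derivative_at[OF has_derivative_mult[OF
        assms[THEN frechet_derivative_works[THEN iffD1]]]], of h]
  by simp

lemma linear_Pair_split:
  fixes D :: "'a::real_vector \<times> real \<Rightarrow> real"
  assumes "linear D"
  shows "D (u, \<beta>) = D (u, 0) + \<beta> * D (0, 1)"
  using linear_add[OF assms, of "(u, 0)" "\<beta> *\<^sub>R (0, 1)"] linear_scale[OF assms, of \<beta> "(0, 1)"]
  by simp

lemma DERIV_nonzero_imp_sign_change:
  fixes g :: "real \<Rightarrow> real"
  assumes g: "(g has_real_derivative D) (at v)" and "D \<noteq> 0" "\<delta> > 0"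
  shows "\<exists>e. 0 < e \<and> e < \<delta> \<and> (g (v - e) - g v) * (g (v + e) - g v) < 0"
proof -
  have "\<exists>e. 0 < e \<and> e < \<delta> \<and> h (v - e) < h v \<and> h v < h (v + e)"
    if h: "(h has_real_derivative E) (at v)" "E > 0" for h E
  proof -
    obtain d1 where d1: "d1 > 0" "\<And>e. 0 < e \<Longrightarrow> e < d1 \<Longrightarrow> h v < h (v + e)"
      using DERIV_pos_inc_right[OF h] by blast
    obtain d2 where d2: "d2 > 0" "\<And>e. 0 < e \<Longrightarrow> e < d2 \<Longrightarrow> h (v - e) < h v"
      using DERIV_pos_inc_left[OF h] by blast
    show ?thesis
      by (rule exI[of _ "min (min d1 d2) \<delta> / 2"]) (use d1 d2 \<open>\<delta> > 0\<close> in auto)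
  qed
  from this[of g D] this[of "\<lambda>x. - g x" "- D", OF DERIV_minus[OF g]] g \<open>D \<noteq> 0\<close>
  show ?thesis
    by (cases "D > 0") (auto simp: mult_neg_pos mult_pos_neg)
qed

lemma eventually_attains_value_nhds:
  fixes F :: "'a::t2_space \<Rightarrow> real \<Rightarrow> real"
  assumes st: "s \<le> t" and sign: "(F x0 s - w) * (F x0 t - w) < 0"
    and cont_s: "isCont (\<lambda>x. F x s) x0" and cont_t: "isCont (\<lambda>x. F x t) x0"
    and cont: "\<forall>\<^sub>F x in nhds x0. continuous_on {s..t} (F x)"
  shows "\<forall>\<^sub>F x in nhds x0. \<exists>u\<in>{s..t}. F x u = w"
proof -
  have "isCont (\<lambda>x. (F x s - w) * (F x t - w)) x0"
    by (intro continuous_intros cont_s cont_t)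
  from order_tendstoD(2)[OF isContD[OF this]] sign
  have "\<forall>\<^sub>F x in nhds x0. (F x s - w) * (F x t - w) < 0"
    by (simp add: eventually_nhds_conv_at)
  then show ?thesis
    using cont
  proof eventually_elim
    case (elim x)
    then show ?case
      using IVT'[of "F x" s w t] IVT2'[of "F x" t w s] st
      by (cases "F x s < w") (auto simp: mult_less_0_iff)
  qed
qed

definition W_tilde :: "('m \<Rightarrow> real \<Rightarrow> real) \<Rightarrow> ('m \<Rightarrow> real \<Rightarrow> real) \<Rightarrow> 'm \<times> real \<Rightarrow> real" where
  "W_tilde a W = (\<lambda>(p, v). a p v * deriv (W p) v)"

locale normal_shift_chart =
  fixes c :: "('m::topological_space, 'n::finite) chart"
    and a :: "'m \<Rightarrow> real \<Rightarrow> real"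
    and bc :: "('m, 'n) chart \<Rightarrow> real^'n \<Rightarrow> real \<Rightarrow> real^'n"
    and V W :: "'m \<Rightarrow> real \<Rightarrow> real"
  assumes dom_open: "open (chart_dom c)"
    and img_open: "open (chart_img c)"
    and chart_homeo: "homeomorphism (chart_dom c) (chart_img c) (chart_map c) (chart_inv c)"
    and a_smooth: "smooth_on (cdom c) (loc c a)"
    and W_smooth: "smooth_on (cdom c) (loc c W)"
    and b_smooth: "smooth_on (cdom c) (\<lambda>(x, v). bc c x v)"
    and a_eq: "\<forall>z\<in>cdom c. \<forall>i. pdx i (loc c a) z + bcomp bc c i z * pdv (loc c a) z =
        pdv (bcomp bc c i) z * loc c a z"
    and V_pos: "\<forall>p. \<forall>w>0. V p w > 0"
    and V_pfaff: "\<forall>x\<in>chart_img c. \<forall>w>0.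
        ((\<lambda>y. V (chart_inv c y) w) has_derivative (\<lambda>u. bc c x (V (chart_inv c x) w) \<bullet> u)) (at x)"
    and W_def: "\<forall>p. \<forall>v>0. W p v > 0 \<and> V p (W p v) = v"
    and W_v_nz: "\<forall>p. \<forall>v>0. deriv (W p) v \<noteq> 0"
begin

abbreviation "al \<equiv> loc c a"
abbreviation "Wl \<equiv> loc c W"
abbreviation "Wv \<equiv> pdv (loc c W)"
abbreviation "bl i \<equiv> bcomp bc c i"

definition pdb :: "'n \<Rightarrow> ((real^'n) \<times> real \<Rightarrow> real) \<Rightarrow> (real^'n) \<times> real \<Rightarrow> real" where
  "pdb i F z = pdx i F z + bl i z * pdv F z"

lemma cdom_open: "open (cdom c)"
  unfolding cdom_def using img_open by (simp add: open_Times)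

lemma mem_cdom: "(x, v) \<in> cdom c \<longleftrightarrow> x \<in> chart_img c \<and> v > 0"
  by (simp add: cdom_def)

lemma Wv_smooth: "smooth_on (cdom c) Wv"
  by (rule smooth_on_pdv[OF W_smooth])

lemma differentiable_at_cdom:
  assumes "z \<in> cdom c"
  shows "al differentiable (at z)" "Wl differentiable (at z)" "Wv differentiable (at z)"
    and "bl i differentiable (at z)"
proof -
  show "al differentiable (at z)" "Wl differentiable (at z)" "Wv differentiable (at z)"
    using smooth_on_imp_differentiable[OF _ cdom_open assms] a_smooth W_smooth Wv_smooth by auto
  have "(\<lambda>(x, v). bc c x v) differentiable (at z)"
    by (rule smooth_on_imp_differentiable[OF b_smooth cdom_open assms])
  from differentiable_compose[OF bounded_linear_imp_differentiable[OF bounded_linear_vec_nth] this]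
  show "bl i differentiable (at z)"
    by (simp add: bcomp_def o_def split_def)
qed

lemma pdb_mult:
  assumes "F differentiable (at z)" "G differentiable (at z)"
  shows "pdb i (\<lambda>z. F z * G z) z = F z * pdb i G z + pdb i F z * G z"
  using assms by (simp add: pdb_def pdx_def pdv_def frechet_derivative_mult_apply algebra_simps)

lemma deriv_W_eq_Wv:
  assumes "x \<in> chart_img c" "v > 0"
  shows "((\<lambda>t. W (chart_inv c x) t) has_real_derivative Wv (x, v)) (at v)"
    and "deriv (W (chart_inv c x)) v = Wv (x, v)"
proof -
  show *: "((\<lambda>t. W (chart_inv c x) t) has_real_derivative Wv (x, v)) (at v)"
    using pdv_has_real_derivative[OF differentiable_at_cdom(2)] assms by (simp add: mem_cdom loc_def)
  show "deriv (W (chart_inv c x)) v = Wv (x, v)"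
    using DERIV_imp_deriv[OF *] by simp
qed

lemma has_derivative_along_V:
  assumes y: "y \<in> chart_img c" and w: "w > 0"
    and F: "F differentiable (at (y, V (chart_inv c y) w))"
  obtains D where "((\<lambda>y. F (y, V (chart_inv c y) w)) has_derivative D) (at y)"
    and "\<And>i. D (axis i 1) = pdb i F (y, V (chart_inv c y) w)"
proof
  let ?z = "(y, V (chart_inv c y) w)" and ?B = "bc c y (V (chart_inv c y) w)"
  let ?DF = "frechet_derivative F (at ?z)"
  have "((\<lambda>y. (y, V (chart_inv c y) w)) has_derivative (\<lambda>u. (u, ?B \<bullet> u))) (at y)"
    by (rule has_derivative_Pair[OF has_derivative_ident V_pfaff[rule_format, OF y w]])
  from has_derivative_compose[OF this F[unfolded frechet_derivative_works]]
  show "((\<lambda>y. F (y, V (chart_inv c y) w)) has_derivative (\<lambda>u. ?DF (u, ?B \<bullet> u))) (at y)" .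
  have "linear ?DF"
    using F frechet_derivative_works has_derivative_linear by blast
  then show "?DF (axis i 1, ?B \<bullet> axis i 1) = pdb i F ?z" for i
    using linear_Pair_split[of ?DF "axis i 1" "?B $ i"]
    by (simp add: inner_axis pdb_def pdx_def pdv_def bcomp_def)
qed

text \<open>
  \<open>V(p, \<cdot>)\<close> is only known to be a left inverse of \<open>W(p, \<cdot>)\<close>. Near \<open>x\<^sub>0\<close> the value
  \<open>w\<close> is attained by \<open>W(x, \<cdot>)\<close> by the intermediate value theorem, since \<open>W(x\<^sub>0, \<cdot>)\<close>
  crosses \<open>w\<close> transversally at \<open>v\<^sub>0\<close>.
\<close>
lemma W_V_eventually_eq:
  assumes x0: "x0 \<in> chart_img c" and v0: "v0 > 0"
  defines "w \<equiv> W (chart_inv c x0) v0"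
  shows "\<forall>\<^sub>F x in nhds x0. Wl (x, V (chart_inv c x) w) = w"
proof -
  obtain e where e: "0 < e" "e < v0"
    and cross: "(Wl (x0, v0 - e) - w) * (Wl (x0, v0 + e) - w) < 0"
    using DERIV_nonzero_imp_sign_change[OF deriv_W_eq_Wv(1)[OF x0 v0] _ v0]
      W_v_nz deriv_W_eq_Wv(2)[OF x0 v0] v0
    by (fastforce simp: loc_def w_def)
  have cont_x: "isCont (\<lambda>x. Wl (x, t)) x0" if "t > 0" for t
  proof (rule isCont_o2[where f = "\<lambda>x. (x, t)" and g = Wl])
    show "isCont Wl (x0, t)"
      by (rule differentiable_imp_continuous_within[OF differentiable_at_cdom(2)])
        (simp add: mem_cdom x0 that)
  qed (intro continuous_intros)
  have cont_v: "continuous_on {v0-e..v0+e} (\<lambda>u. Wl (x, u))" if "x \<in> chart_img c" for x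
    using DERIV_isCont[OF deriv_W_eq_Wv(1)[OF that]] e
    by (auto simp: loc_def intro!: continuous_at_imp_continuous_on)
  have "\<forall>\<^sub>F x in nhds x0. \<exists>u\<in>{v0-e..v0+e}. Wl (x, u) = w"
  proof (rule eventually_attains_value_nhds[where F = "\<lambda>x u. Wl (x, u)", OF _ cross])
    show "\<forall>\<^sub>F x in nhds x0. continuous_on {v0-e..v0+e} (\<lambda>u. Wl (x, u))"
      using eventually_nhds_in_open[OF img_open x0] by (rule eventually_mono) (rule cont_v)
  qed (use e cont_x in auto)
  then show ?thesis
  proof (rule eventually_mono)
    fix x assume "\<exists>u\<in>{v0-e..v0+e}. Wl (x, u) = w"
    then obtain u where u: "u \<in> {v0-e..v0+e}" "Wl (x, u) = w" ..
    then have "V (chart_inv c x) w = u"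
      using W_def e by (auto simp: loc_def)
    then show "Wl (x, V (chart_inv c x) w) = w"
      using u by simp
  qed
qed

lemma W_pfaff_identity:
  assumes "z \<in> cdom c"
  shows "pdb i Wl z = 0"
proof -
  obtain x0 v0 where z: "z = (x0, v0)" "x0 \<in> chart_img c" "v0 > 0"
    using assms by (cases z) (auto simp: mem_cdom)
  define w where "w = W (chart_inv c x0) v0"
  have w: "w > 0" "V (chart_inv c x0) w = v0"
    using W_def z by (auto simp: w_def)
  obtain D where D: "((\<lambda>y. Wl (y, V (chart_inv c y) w)) has_derivative D) (at x0)"
    and D_axis: "\<And>i. D (axis i 1) = pdb i Wl (x0, v0)"
    using has_derivative_along_V[OF z(2) w(1)] differentiable_at_cdom(2)[OF assms] w(2) z(1)
    by metis
  have "\<forall>\<^sub>F y in at x0. w = Wl (y, V (chart_inv c y) w)"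
    using W_V_eventually_eq[OF z(2,3)] by (auto simp: w_def eventually_nhds_conv_at elim: eventually_mono)
  then have "((\<lambda>y. Wl (y, V (chart_inv c y) w)) has_derivative (\<lambda>h. 0)) (at x0)"
    by (rule has_derivative_transform_eventually[OF has_derivative_const])
      (simp_all add: w(2) loc_def w_def[symmetric])
  with D have "D = (\<lambda>h. 0)" by (rule has_derivative_unique)
  then show ?thesis using D_axis z(1) by metis
qed

lemma Wv_pfaff_identity:
  assumes "z \<in> cdom c"
  shows "pdb i Wv z = - (pdv (bl i) z * Wv z)"
proof -
  obtain x v where z: "z = (x, v)" "x \<in> chart_img c" "v > 0"
    using assms by (cases z) (auto simp: mem_cdom)
  have "((\<lambda>t. pdx i Wl (x, t)) has_real_derivative pdx i Wv z) (at v)"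
    using pdx_pdv_commute[OF W_smooth cdom_open] assms z(1) by simp
  moreover have "((\<lambda>t. pdx i Wl (x, t)) has_real_derivative
      - (pdv (bl i) z * Wv z + bl i z * pdv Wv z)) (at v)"
  proof (rule has_field_derivative_transform_within_open[of _ _ _ "{0<..}"])
    show "((\<lambda>t. - (bl i (x, t) * Wv (x, t))) has_real_derivative
        - (pdv (bl i) z * Wv z + bl i z * pdv Wv z)) (at v)"
      using DERIV_minus[OF DERIV_mult[OF pdv_has_real_derivative pdv_has_real_derivative],
          OF differentiable_at_cdom(4,3)[OF assms[unfolded z(1)]]] z(1)
      by (simp add: algebra_simps)
    show "- (bl i (x, t) * Wv (x, t)) = pdx i Wl (x, t)" if "t \<in> {0<..}" for t
      using W_pfaff_identity[of "(x, t)" i] z(2) that by (simp add: mem_cdom pdb_def)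
  qed (use z in auto)
  ultimately have "pdx i Wv z = - (pdv (bl i) z * Wv z + bl i z * pdv Wv z)"
    by (rule DERIV_unique)
  then show ?thesis by (simp add: pdb_def algebra_simps)
qed

lemma aWv_along_V_has_derivative_zero:
  assumes y: "y \<in> chart_img c" and k: "k > 0"
  shows "((\<lambda>y. al (y, V (chart_inv c y) k) * Wv (y, V (chart_inv c y) k)) has_derivative (\<lambda>h. 0))
    (at y)"
proof -
  let ?z = "(y, V (chart_inv c y) k)"
  have z: "?z \<in> cdom c" using y k V_pos by (simp add: mem_cdom)
  have "(\<lambda>z. al z * Wv z) differentiable (at ?z)"
    using differentiable_at_cdom[OF z] by simp
  then obtain D where D: "((\<lambda>y. al (y, V (chart_inv c y) k) * Wv (y, V (chart_inv c y) k))
      has_derivative D) (at y)"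
    and D_axis: "\<And>i. D (axis i 1) = pdb i (\<lambda>z. al z * Wv z) ?z"
    using has_derivative_along_V[OF y k] by blast
  have "D (axis i 1) = 0" for i
    using a_eq z Wv_pfaff_identity[OF z, of i]
    by (simp add: D_axis pdb_mult differentiable_at_cdom[OF z]) (simp add: pdb_def)
  then have "D = (\<lambda>h. 0)"
    by (intro linear_eq_stdbasis has_derivative_linear[OF D] linear_zero) (auto simp: Basis_vec_def)
  with D show ?thesis by simp
qed

lemma aWv_along_V_constant_on_ball:
  assumes "ball x0 r \<subseteq> chart_img c" "k > 0"
  obtains C where "\<And>y. y \<in> ball x0 r \<Longrightarrow> al (y, V (chart_inv c y) k) * Wv (y, V (chart_inv c y) k) = C"
proof -
  have "\<exists>C. \<forall>y\<in>ball x0 r. al (y, V (chart_inv c y) k) * Wv (y, V (chart_inv c y) k) = C"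
  proof (rule has_derivative_zero_constant[OF convex_ball])
    fix y assume "y \<in> ball x0 r"
    then show "((\<lambda>y. al (y, V (chart_inv c y) k) * Wv (y, V (chart_inv c y) k)) has_derivative (\<lambda>h. 0))
        (at y within ball x0 r)"
      using assms by (intro has_derivative_at_withinI[OF aWv_along_V_has_derivative_zero]) auto
  qed
  then show ?thesis using that by blast
qed

lemma W_tilde_locally_constant_on_level:
  assumes p: "p \<in> chart_dom c" and v: "v > 0" and k: "W p v = k"
  defines "L \<equiv> {(p, v). v > 0 \<and> W p v = k}"
  shows "\<exists>T. openin (top_of_set L) T \<and> (p, v) \<in> T \<and> (\<forall>z\<in>T. W_tilde a W z = W_tilde a W (p, v))"
proof -
  have "k > 0" using W_def v k by blast
  have chart_inv_map: "chart_inv c (chart_map c q) = q" and chart_map_img: "chart_map c q \<in> chart_img c"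
    if "q \<in> chart_dom c" for q
    using chart_homeo that unfolding homeomorphism_def by auto
  define x0 where "x0 = chart_map c p"
  obtain r where r: "r > 0" "ball x0 r \<subseteq> chart_img c"
    using img_open chart_map_img[OF p] open_contains_ball unfolding x0_def by blast
  obtain C where C: "\<And>y. y \<in> ball x0 r \<Longrightarrow> al (y, V (chart_inv c y) k) * Wv (y, V (chart_inv c y) k) = C"
    using aWv_along_V_constant_on_ball[OF r(2) \<open>k > 0\<close>] by blast
  define U where "U = chart_map c -` ball x0 r \<inter> chart_dom c"
  have "continuous_on (chart_dom c) (chart_map c)"
    using chart_homeo by (simp add: homeomorphism_def)
  then have "open U"
    unfolding U_def by (metis continuous_on_open_vimage dom_open open_ball)
  have W_tilde_eq: "W_tilde a W (q, u) = C" if "(q, u) \<in> L" "q \<in> U" for q u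
  proof -
    have u: "u > 0" "W q u = k" using that(1) by (auto simp: L_def)
    then have "V q k = u" using W_def by blast
    have q: "q \<in> chart_dom c" "chart_map c q \<in> ball x0 r" using that(2) by (auto simp: U_def)
    show ?thesis
      using C[OF q(2)] deriv_W_eq_Wv(2)[OF chart_map_img[OF q(1)] u(1)] \<open>V q k = u\<close>
      by (simp add: W_tilde_def loc_def chart_inv_map[OF q(1)])
  qed
  show ?thesis
  proof (intro exI conjI)
    show "openin (top_of_set L) (L \<inter> (U \<times> UNIV))"
      using \<open>open U\<close> by (auto intro!: openin_open_Int open_Times)
    show "(p, v) \<in> L \<inter> (U \<times> UNIV)"
      using p v k r(1) by (simp add: L_def U_def x0_def)
    then show "\<forall>z\<in>L \<inter> (U \<times> UNIV). W_tilde a W z = W_tilde a W (p, v)"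
      using W_tilde_eq by auto
  qed
qed

end

theorem lemma5p1:
  fixes A :: "('m::{t2_space, second_countable_topology}, 'n::finite) chart set"
    and gc :: "('m,'n) chart \<Rightarrow> real^'n \<Rightarrow> real^'n^'n"
    and a :: "'m \<Rightarrow> real \<Rightarrow> real"
    and bc :: "('m,'n) chart \<Rightarrow> real^'n \<Rightarrow> real \<Rightarrow> real^'n"
    and f :: "real \<Rightarrow> real"
    and p0 :: 'm
    and V W :: "'m \<Rightarrow> real \<Rightarrow> real"
  assumes atlas: "smooth_atlas A"
    and conn: "connected (UNIV :: 'm set)"
    and simply_conn: "simply_connected (UNIV :: 'm set)"
    and metric: "riemannian_metric A gc"
    and a_smooth: "smooth_fun A a"
    and b_field: "covector_field A bc"
    and b_eq: "\<forall>c\<in>A. \<forall>z\<in>cdom c. \<forall>i j.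
        pdx j (bcomp bc c i) z + bcomp bc c j z * pdv (bcomp bc c i) z =
        pdx i (bcomp bc c j) z + bcomp bc c i z * pdv (bcomp bc c j) z"
    and a_eq: "\<forall>c\<in>A. \<forall>z\<in>cdom c. \<forall>i.
        pdx i (loc c a) z + bcomp bc c i z * pdv (loc c a) z =
        pdv (bcomp bc c i) z * loc c a z"
    and f_adm: "admissible_f f"
    and b_bounded: "f_norm_finite A gc f bc"
    and V_pos: "\<forall>p. \<forall>w>0. V p w > 0"
    and V_init: "\<forall>w>0. V p0 w = w"
    and V_pfaff: "\<forall>c\<in>A. \<forall>x\<in>chart_img c. \<forall>w>0.
        ((\<lambda>y. V (chart_inv c y) w) has_derivative
           (\<lambda>u. bc c x (V (chart_inv c x) w) \<bullet> u)) (at x)"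
    and W_def: "\<forall>p. \<forall>v>0. W p v > 0 \<and> V p (W p v) = v"
    and W_smooth: "smooth_fun A W"
    and W_v_nz: "\<forall>p. \<forall>v>0. deriv (W p) v \<noteq> 0"
    and levels_connected: "\<forall>k. connected {(p, v). v > 0 \<and> W p v = k}"
  shows "\<forall>q0 v0 q1 v1. v0 > 0 \<longrightarrow> v1 > 0 \<longrightarrow> W q0 v0 = W q1 v1 \<longrightarrow>
           a q0 v0 * deriv (W q0) v0 = a q1 v1 * deriv (W q1) v1"
proof (intro allI impI)
  fix q0 q1 :: 'm and v0 v1 :: real
  assume v0: "v0 > 0" and v1: "v1 > 0" and level: "W q0 v0 = W q1 v1"
  define k where "k = W q0 v0"
  let ?L = "{(p, v). v > 0 \<and> W p v = k}"
  have chart: "normal_shift_chart c a bc V W" if c: "c \<in> A" for c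
  proof
    show "open (chart_dom c)" "open (chart_img c)"
      and "homeomorphism (chart_dom c) (chart_img c) (chart_map c) (chart_inv c)"
      using atlas c unfolding smooth_atlas_def by blast+
    show "smooth_on (cdom c) (loc c a)" "smooth_on (cdom c) (loc c W)"
      using a_smooth W_smooth c unfolding smooth_fun_def by blast+
    show "smooth_on (cdom c) (\<lambda>(x, v). bc c x v)"
      using b_field c unfolding covector_field_def by blast
  qed (use c a_eq V_pfaff V_pos W_def W_v_nz in simp_all)
  have "W_tilde a W constant_on ?L"
  proof (rule locally_constant_imp_constant[OF levels_connected[rule_format]])
    fix z assume "z \<in> ?L"
    then obtain p v where z: "z = (p, v)" "v > 0" "W p v = k" by blast
    have "p \<in> (\<Union>c\<in>A. chart_dom c)" using atlas by (simp add: smooth_atlas_def)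
    then obtain c where "c \<in> A" "p \<in> chart_dom c" by blast
    then show "\<exists>T. openin (top_of_set ?L) T \<and> z \<in> T \<and> (\<forall>x\<in>T. W_tilde a W x = W_tilde a W z)"
      using normal_shift_chart.W_tilde_locally_constant_on_level[OF chart] z by blast
  qed
  moreover have "(q0, v0) \<in> ?L" "(q1, v1) \<in> ?L"
    using v0 v1 level by (auto simp: k_def)
  ultimately show "a q0 v0 * deriv (W q0) v0 = a q1 v1 * deriv (W q1) v1"
    unfolding constant_on_def W_tilde_def by fastforce
qed

end
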